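(* Let $P$ be a Poisson bracket on $\mathbb{R}^n$, let $\ast_\nu$ be a star-product on $(\mathbb{R}^n,P)$, and let $\rho=\sum_{r\ge0}\nu^r\rho_r$, $\rho_r:\mathsf{Pol}\to\mathsf{N}$, be the cochains of the associated sun-product. Then for every $r\ge1$, $\rho_r$ is the restriction to $\mathsf{Pol}$ of a differential operator on $\mathsf{N}$ (vanishing on constants).
   Context: $\mathsf{N}=C^\infty(\mathbb{R}^n)$, coordinates $x_1,\dots,x_n$, $\mathsf{Pol}=\mathbb{R}[x_1,\dots,x_n]$. A (differential) star-product on $(\mathbb{R}^n,P)$ is a bilinear map $f\ast_\nu g=\sum_{r\ge0}\nu^rC_r(f,g)$ from $\mathsf{N}\times\mathsf{N}$ to $\mathsf{N}[[\nu]]$, extended $\mathbb{R}[[\nu]]$-bilinearly to $\mathsf{N}[[\nu]]$, where the $C_r$ are bidifferential operators with: $C_0(f,g)=fg$; $C_r(c,f)=C_r(f,c)=0$ for $r\ge1$ and constants $c$; associativity $\sum_{s+t=r}C_s(C_t(f,g),h)=\sum_{s+t=r}C_s(f,C_t(g,h))$ for all $r\ge0$; and $C_1(f,g)-C_1(g,f)=2P(f,g)$. The cochains of the associated sun-product are the $\mathbb{R}$-linear maps $\rho_r:\mathsf{Pol}\to\mathsf{N}$ determined by $\rho(1)=1$ and, for every monomial, $\rho(x_{i_1}\cdots x_{i_k})=\frac1{k!}\sum_{\sigma\in S_k}x_{i_{\sigma(1)}}\ast_\nu\cdots\ast_\nu x_{i_{\sigma(k)}}=\sum_{r\ge0}\nu^r\rho_r(x_{i_1}\cdots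 x_{i_k})$ ($k\ge1$); then $\rho_0$ is the identity and the sun-product is $f\odot_\nu g=\rho(\pi(fg))$ where $\pi$ takes the $\nu^0$-coefficient. *)

theory Defs
  imports "HOL-Analysis.Analysis"
begin

type_synonym 'n fn = "real ^ 'n \<Rightarrow> real"

definition pd :: "'n::finite \<Rightarrow> 'n fn \<Rightarrow> 'n fn" where
  "pd i f x = deriv (\<lambda>t. f (x + t *\<^sub>R axis i 1)) 0"

fun iter_pd :: "'n::finite list \<Rightarrow> 'n fn \<Rightarrow> 'n fn" where
  "iter_pd [] f = f"
| "iter_pd (i # is) f = pd i (iter_pd is f)"

definition smooth :: "'n::finite fn \<Rightarrow> bool" where
  "smooth f \<longleftrightarrow> (\<forall>is. continuous_on UNIV (iter_pd is f)) \<and>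
     (\<forall>is i x. (\<lambda>t. iter_pd is f (x + t *\<^sub>R axis i 1)) differentiable (at 0))"

definition diff_op :: "('n::finite fn \<Rightarrow> 'n fn) \<Rightarrow> bool" where
  "diff_op D \<longleftrightarrow> (\<exists>S a. finite S \<and> (\<forall>is\<in>S. smooth (a is)) \<and>
     (\<forall>f. smooth f \<longrightarrow> D f = (\<lambda>x. \<Sum>is\<in>S. a is x * iter_pd is f x)))"

definition bidiff_op :: "('n::finite fn \<Rightarrow> 'n fn \<Rightarrow> 'n fn) \<Rightarrow> bool" where
  "bidiff_op B \<longleftrightarrow> (\<exists>S a. finite S \<and> (\<forall>p\<in>S. smooth (a p)) \<and>
     (\<forall>f g. smooth f \<longrightarrow> smooth g \<longrightarrow>
        B f g = (\<lambda>x. \<Sum>p\<in>S. a p x * iter_pd (fst p) f x * iter_pd (snd p) g x)))"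

definition poisson_bracket :: "('n::finite fn \<Rightarrow> 'n fn \<Rightarrow> 'n fn) \<Rightarrow> bool" where
  "poisson_bracket P \<longleftrightarrow> (\<exists>\<pi>. (\<forall>i j. smooth (\<pi> i j)) \<and> (\<forall>i j x. \<pi> i j x = - \<pi> j i x) \<and>
     (\<forall>f g. smooth f \<longrightarrow> smooth g \<longrightarrow>
        P f g = (\<lambda>x. \<Sum>i\<in>UNIV. \<Sum>j\<in>UNIV. \<pi> i j x * pd i f x * pd j g x)) \<and>
     (\<forall>f g h. smooth f \<longrightarrow> smooth g \<longrightarrow> smooth h \<longrightarrow>
        (\<forall>x. P f (P g h) x + P g (P h f) x + P h (P f g) x = 0)))"

definition star_product :: "('n::finite fn \<Rightarrow> 'n fn \<Rightarrow> 'n fn) \<Rightarrow> (nat \<Rightarrow> 'n fn \<Rightarrow> 'n fn \<Rightarrow> 'n fn) \<Rightarrow> bool" where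
  "star_product P C \<longleftrightarrow>
     (\<forall>r. bidiff_op (C r)) \<and>
     (\<forall>f g. smooth f \<longrightarrow> smooth g \<longrightarrow> C 0 f g = (\<lambda>x. f x * g x)) \<and>
     (\<forall>r c f. r \<ge> 1 \<longrightarrow> smooth f \<longrightarrow> C r (\<lambda>x. c) f = (\<lambda>x. 0) \<and> C r f (\<lambda>x. c) = (\<lambda>x. 0)) \<and>
     (\<forall>r f g h. smooth f \<longrightarrow> smooth g \<longrightarrow> smooth h \<longrightarrow>
        (\<lambda>x. \<Sum>s\<le>r. C s (C (r - s) f g) h x) = (\<lambda>x. \<Sum>s\<le>r. C s f (C (r - s) g h) x)) \<and>
     (\<forall>f g. smooth f \<longrightarrow> smooth g \<longrightarrow> (\<lambda>x. C 1 f g x - C 1 g f x) = (\<lambda>x. 2 * P f g x))"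

text \<open>Formal power series in nu with coefficients in N: sequences nat => N.\<close>
definition star :: "(nat \<Rightarrow> 'n::finite fn \<Rightarrow> 'n fn \<Rightarrow> 'n fn) \<Rightarrow> (nat \<Rightarrow> 'n fn) \<Rightarrow> (nat \<Rightarrow> 'n fn) \<Rightarrow> nat \<Rightarrow> 'n fn" where
  "star C F G r = (\<lambda>x. \<Sum>s\<le>r. \<Sum>t\<le>r - s. C s (F t) (G (r - s - t)) x)"

definition one_series :: "nat \<Rightarrow> 'n::finite fn" where
  "one_series r = (if r = 0 then (\<lambda>x. 1) else (\<lambda>x. 0))"

definition coord_series :: "'n::finite \<Rightarrow> nat \<Rightarrow> 'n fn" where
  "coord_series i r = (if r = 0 then (\<lambda>x. x $ i) else (\<lambda>x. 0))"

fun star_list :: "(nat \<Rightarrow> 'n::finite fn \<Rightarrow> 'n fn \<Rightarrow> 'n fn) \<Rightarrow> (nat \<Rightarrow> 'n fn) list \<Rightarrow> nat \<Rightarrow> 'n fn" where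
  "star_list C [] = one_series"
| "star_list C (F # Fs) = star C F (star_list C Fs)"

definition mono :: "'n::finite list \<Rightarrow> 'n fn" where
  "mono xs = (\<lambda>x. prod_list (map (\<lambda>i. x $ i) xs))"

text \<open>nu^r-coefficient of rho on a monomial (symmetrised star product; rho(1)=1).\<close>
definition rho_mono :: "(nat \<Rightarrow> 'n::finite fn \<Rightarrow> 'n fn \<Rightarrow> 'n fn) \<Rightarrow> 'n list \<Rightarrow> nat \<Rightarrow> 'n fn" where
  "rho_mono C xs r = (\<lambda>x. (1 / fact (length xs)) *
      (\<Sum>\<sigma> | \<sigma> permutes {..<length xs}.
          star_list C (map (\<lambda>j. coord_series (xs ! \<sigma> j)) [0..<length xs]) r x))"

end

theory Submission
  imports Defs "HOL-Combinatorics.Multiset_Permutations"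
begin

(*
  Write m_I for the monomial with factors x_(g i), i in I, and Y_r(I) for the nu^r-coefficient of
  the symmetrised star product of these factors, so that rho_r(m_I) = Y_r(I). Splitting off the
  first factor, x_j * F = sum_s nu^s C_s(x_j, F), gives the recursion

    |I| Y_r(I) = sum_i x_(g i) Y_r(I - i) + sum_i sum_(s = 1..r) C_s(x_(g i), Y_(r-s)(I - i)).

  By induction on r, Y_(r-s) is given on monomials by a differential operator D_(r-s), so the last
  sum is E(m_I) for the differential operator E = sum_s sum_j C_s(x_j, D_(r-s)(d_j -)), which kills
  constants. If E = sum_alpha e_alpha d^alpha, Euler's identity shows that
  D = sum_(alpha nonempty) e_alpha / |alpha| d^alpha satisfies the same recursion as Y_r, and both
  vanish on constants, hence D(m_I) = Y_r(I). Only the bidifferentiality of the C_s and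
  C_0(f, g) = f g are used.
*)

section \<open>Smooth functions\<close>

definition coord_differentiable :: "'n::finite fn \<Rightarrow> bool" where
  "coord_differentiable h \<longleftrightarrow> (\<forall>i x. (\<lambda>t. h (x + t *\<^sub>R axis i 1)) differentiable (at 0))"

lemma coord_differentiable_const [simp]: "coord_differentiable (\<lambda>x. c)"
  unfolding coord_differentiable_def by simp

lemma coord_differentiable_add:
  "coord_differentiable u \<Longrightarrow> coord_differentiable v \<Longrightarrow> coord_differentiable (\<lambda>x. u x + v x)"
  unfolding coord_differentiable_def by (auto intro: differentiable_add)

lemma coord_differentiable_mult:
  "coord_differentiable u \<Longrightarrow> coord_differentiable v \<Longrightarrow> coord_differentiable (\<lambda>x. u x * v x)"
  unfolding coord_differentiable_def by (auto intro: differentiable_mult)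

lemma coord_differentiable_lincomb:
  "(\<And>t. t \<in> T \<Longrightarrow> coord_differentiable (h t)) \<Longrightarrow>
    coord_differentiable (\<lambda>x. \<Sum>t\<in>T. c t * h t x)"
  unfolding coord_differentiable_def
  by (cases "finite T") (auto intro!: differentiable_sum differentiable_mult)

lemma smooth_iff:
  "smooth f \<longleftrightarrow> (\<forall>\<alpha>. continuous_on UNIV (iter_pd \<alpha> f) \<and> coord_differentiable (iter_pd \<alpha> f))"
  unfolding smooth_def coord_differentiable_def by blast

lemma smooth_imp_coord_differentiable: "smooth f \<Longrightarrow> coord_differentiable f"
  unfolding smooth_iff by (metis iter_pd.simps(1))

lemma smooth_imp_continuous: "smooth f \<Longrightarrow> continuous_on UNIV f"
  unfolding smooth_iff by (metis iter_pd.simps(1))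

lemma iter_pd_append: "iter_pd (\<alpha> @ \<beta>) f = iter_pd \<alpha> (iter_pd \<beta> f)"
  by (induction \<alpha>) auto

lemma smooth_iter_pd: "smooth f \<Longrightarrow> smooth (iter_pd \<alpha> f)"
  unfolding smooth_iff by (metis iter_pd_append)

lemma smooth_pd: "smooth f \<Longrightarrow> smooth (pd i f)"
  using smooth_iter_pd[of f "[i]"] by simp

lemma smooth_iff_pd:
  "smooth f \<longleftrightarrow> continuous_on UNIV f \<and> coord_differentiable f \<and> (\<forall>i. smooth (pd i f))"
proof (intro iffI)
  assume "continuous_on UNIV f \<and> coord_differentiable f \<and> (\<forall>i. smooth (pd i f))"
  moreover have "iter_pd (\<alpha> @ [i]) f = iter_pd \<alpha> (pd i f)" for \<alpha> i
    by (simp add: iter_pd_append)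
  ultimately show "smooth f"
    unfolding smooth_iff by (metis iter_pd.simps(1) rev_exhaust)
qed (simp add: smooth_imp_continuous smooth_imp_coord_differentiable smooth_pd)

lemma has_field_derivative_pd:
  "coord_differentiable h \<Longrightarrow> ((\<lambda>t. h (x + t *\<^sub>R axis i 1)) has_field_derivative pd i h x) (at 0)"
  unfolding coord_differentiable_def pd_def using DERIV_deriv_iff_real_differentiable by blast

lemma pd_eqI: "((\<lambda>t. h (x + t *\<^sub>R axis i 1)) has_field_derivative D) (at 0) \<Longrightarrow> pd i h x = D"
  unfolding pd_def by (rule DERIV_imp_deriv)

lemma pd_const [simp]: "pd i (\<lambda>x. c) = (\<lambda>x. 0)"
  unfolding pd_def by simp

lemma pd_coord: "pd i (\<lambda>x. x $ j) = (\<lambda>x. of_bool (j = i))"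
  by (rule ext, rule pd_eqI) (auto simp: axis_def intro!: derivative_eq_intros)

lemma pd_add:
  "coord_differentiable u \<Longrightarrow> coord_differentiable v \<Longrightarrow>
    pd i (\<lambda>x. u x + v x) = (\<lambda>x. pd i u x + pd i v x)"
  by (rule ext, rule pd_eqI) (auto intro!: derivative_eq_intros has_field_derivative_pd)

lemma pd_mult:
  "coord_differentiable u \<Longrightarrow> coord_differentiable v \<Longrightarrow>
    pd i (\<lambda>x. u x * v x) = (\<lambda>x. pd i u x * v x + u x * pd i v x)"
  by (rule ext, rule pd_eqI)
     (auto simp: mult.commute intro!: derivative_eq_intros has_field_derivative_pd)

lemma pd_lincomb:
  "(\<And>t. t \<in> T \<Longrightarrow> coord_differentiable (h t)) \<Longrightarrow>
    pd i (\<lambda>x. \<Sum>t\<in>T. c t * h t x) = (\<lambda>x. \<Sum>t\<in>T. c t * pd i (h t) x)"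
  by (rule ext, rule pd_eqI, rule DERIV_sum, rule DERIV_cmult) (simp add: has_field_derivative_pd)

lemma iter_pd_const: "iter_pd \<alpha> (\<lambda>x. c) = (if \<alpha> = [] then (\<lambda>x. c) else (\<lambda>x. 0))"
  by (induction \<alpha>) auto

lemma iter_pd_lincomb:
  "(\<And>t. t \<in> T \<Longrightarrow> smooth (h t)) \<Longrightarrow>
    iter_pd \<alpha> (\<lambda>x. \<Sum>t\<in>T. c t * h t x) = (\<lambda>x. \<Sum>t\<in>T. c t * iter_pd \<alpha> (h t) x)"
  by (induction \<alpha>) (simp_all add: pd_lincomb smooth_imp_coord_differentiable smooth_iter_pd)

lemma smooth_const [simp]: "smooth (\<lambda>x. c)"
  unfolding smooth_iff by (simp add: iter_pd_const)

lemma smooth_coord [simp]: "smooth (\<lambda>x. x $ j)"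
  unfolding smooth_iff_pd[of "\<lambda>x. x $ j"] coord_differentiable_def pd_coord
  by (auto intro!: continuous_intros derivative_intros)

lemma smooth_lincomb:
  assumes "\<And>t. t \<in> T \<Longrightarrow> smooth (h t)"
  shows "smooth (\<lambda>x. \<Sum>t\<in>T. c t * h t x)"
proof -
  have "continuous_on UNIV (iter_pd \<alpha> (h t)) \<and> coord_differentiable (iter_pd \<alpha> (h t))"
    if "t \<in> T" for t \<alpha>
    using assms[OF that] unfolding smooth_iff by blast
  then show ?thesis
    unfolding smooth_iff
    by (auto simp: iter_pd_lincomb[OF assms] intro!: continuous_intros coord_differentiable_lincomb)
qed

lemma smooth_sum:
  assumes "\<And>t. t \<in> T \<Longrightarrow> smooth (h t)"
  shows "smooth (\<lambda>x. \<Sum>t\<in>T. h t x)"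
  using smooth_lincomb[of T h "\<lambda>_. 1"] assms by simp

lemma smooth_cmult:
  assumes "smooth f"
  shows "smooth (\<lambda>x. c * f x)"
  using smooth_lincomb[of "{()}" "\<lambda>_. f" "\<lambda>_. c"] assms by simp

inductive sum_of_products :: "'n::finite fn \<Rightarrow> bool" where
  "sum_of_products (\<lambda>x. 0)"
| "smooth u \<Longrightarrow> smooth v \<Longrightarrow> sum_of_products h \<Longrightarrow> sum_of_products (\<lambda>x. u x * v x + h x)"

lemma sum_of_products_regular:
  "sum_of_products h \<Longrightarrow> continuous_on UNIV h \<and> coord_differentiable h"
proof (induction rule: sum_of_products.induct)
  case (2 u v h)
  then show ?case
    using smooth_imp_continuous smooth_imp_coord_differentiable
    by (auto intro!: continuous_intros coord_differentiable_add coord_differentiable_mult)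
qed simp

lemma sum_of_products_pd: "sum_of_products h \<Longrightarrow> sum_of_products (pd i h)"
proof (induction rule: sum_of_products.induct)
  case (2 u v h)
  then have "pd i (\<lambda>x. u x * v x + h x) = (\<lambda>x. pd i u x * v x + (u x * pd i v x + pd i h x))"
    by (simp add: pd_add pd_mult coord_differentiable_mult sum_of_products_regular
        smooth_imp_coord_differentiable add.assoc)
  then show ?case
    using 2 by (simp add: smooth_pd sum_of_products.intros)
qed (simp add: sum_of_products.intros)

lemma smooth_mult:
  assumes "smooth f" "smooth g"
  shows "smooth (\<lambda>x. f x * g x)"
proof -
  have "sum_of_products (\<lambda>x. f x * g x)"
    using sum_of_products.intros(2)[OF assms sum_of_products.intros(1)] by simp
  then have "sum_of_products (iter_pd \<alpha> (\<lambda>x. f x * g x))" for \<alpha>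
    by (induction \<alpha>) (simp_all add: sum_of_products_pd)
  then show ?thesis
    unfolding smooth_iff by (simp add: sum_of_products_regular)
qed

lemma smooth_prod: "(\<And>t. t \<in> T \<Longrightarrow> smooth (h t)) \<Longrightarrow> smooth (\<lambda>x. \<Prod>t\<in>T. h t x)"
  by (induction T rule: infinite_finite_induct) (simp_all add: smooth_mult)

section \<open>Differential operators\<close>

lemma diff_opI:
  fixes a :: "'b \<Rightarrow> 'n::finite fn" and \<alpha> :: "'b \<Rightarrow> 'n list"
  assumes "finite T" "\<And>t. t \<in> T \<Longrightarrow> smooth (a t)"
    and "\<And>f. smooth f \<Longrightarrow> D f = (\<lambda>x. \<Sum>t\<in>T. a t x * iter_pd (\<alpha> t) f x)"
  shows "diff_op D"
proof -
  define b where "b \<beta> = (\<lambda>x. \<Sum>t\<in>{t\<in>T. \<alpha> t = \<beta>}. a t x)" for \<beta>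
  have "D f = (\<lambda>x. \<Sum>\<beta>\<in>\<alpha> ` T. b \<beta> x * iter_pd \<beta> f x)" if "smooth f" for f
  proof
    fix x
    have "D f x = (\<Sum>\<beta>\<in>\<alpha> ` T. \<Sum>t\<in>{t\<in>T. \<alpha> t = \<beta>}. a t x * iter_pd (\<alpha> t) f x)"
      using assms(3)[OF that] sum.image_gen[OF assms(1), of "\<lambda>t. a t x * iter_pd (\<alpha> t) f x" \<alpha>]
      by simp
    also have "\<dots> = (\<Sum>\<beta>\<in>\<alpha> ` T. b \<beta> x * iter_pd \<beta> f x)"
      unfolding b_def sum_distrib_right by (intro sum.cong) auto
    finally show "D f x = (\<Sum>\<beta>\<in>\<alpha> ` T. b \<beta> x * iter_pd \<beta> f x)" .
  qed
  moreover have "smooth (b \<beta>)" for \<beta>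
    unfolding b_def using assms(2) by (auto intro: smooth_sum)
  ultimately show ?thesis
    unfolding diff_op_def using assms(1) by blast
qed

lemma diff_op_cong: "diff_op A \<Longrightarrow> (\<And>f. smooth f \<Longrightarrow> B f = A f) \<Longrightarrow> diff_op B"
  unfolding diff_op_def by metis

lemma diff_op_id: "diff_op (\<lambda>f. f)"
  by (rule diff_opI[of "{()}" "\<lambda>_ x. 1" _ "\<lambda>_. []"]) auto

lemma diff_op_pd: "diff_op (pd j)"
  by (rule diff_opI[of "{()}" "\<lambda>_ x. 1" _ "\<lambda>_. [j]"]) auto

lemma diff_op_zero: "diff_op (\<lambda>f x. 0)"
  by (rule diff_opI[of "{}"]) auto

lemma diff_op_add:
  assumes "diff_op A" "diff_op B"
  shows "diff_op (\<lambda>f x. A f x + B f x)"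
proof -
  obtain S a where A: "finite S" "\<And>\<alpha>. \<alpha> \<in> S \<Longrightarrow> smooth (a \<alpha>)"
    "\<And>f. smooth f \<Longrightarrow> A f = (\<lambda>x. \<Sum>\<alpha>\<in>S. a \<alpha> x * iter_pd \<alpha> f x)"
    using assms(1) unfolding diff_op_def by blast
  obtain S' b where B: "finite S'" "\<And>\<alpha>. \<alpha> \<in> S' \<Longrightarrow> smooth (b \<alpha>)"
    "\<And>f. smooth f \<Longrightarrow> B f = (\<lambda>x. \<Sum>\<alpha>\<in>S'. b \<alpha> x * iter_pd \<alpha> f x)"
    using assms(2) unfolding diff_op_def by blast
  show ?thesis
    by (rule diff_opI[of "S <+> S'" "case_sum a b" _ "case_sum id id"])
       (use A B in \<open>auto simp: sum.Plus comp_def\<close>)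
qed

lemma diff_op_sum:
  "(\<And>t. t \<in> T \<Longrightarrow> diff_op (A t)) \<Longrightarrow> diff_op (\<lambda>f x. \<Sum>t\<in>T. A t f x)"
  by (induction T rule: infinite_finite_induct) (simp_all add: diff_op_zero diff_op_add)

lemma diff_op_mult:
  assumes "smooth c" "diff_op A"
  shows "diff_op (\<lambda>f x. c x * A f x)"
proof -
  obtain S a where A: "finite S" "\<And>\<alpha>. \<alpha> \<in> S \<Longrightarrow> smooth (a \<alpha>)"
    "\<And>f. smooth f \<Longrightarrow> A f = (\<lambda>x. \<Sum>\<alpha>\<in>S. a \<alpha> x * iter_pd \<alpha> f x)"
    using assms(2) unfolding diff_op_def by blast
  show ?thesis
    by (rule diff_opI[of S "\<lambda>\<alpha> x. c x * a \<alpha> x" _ id])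
       (use A assms(1) in \<open>auto intro: smooth_mult simp: sum_distrib_left mult.assoc\<close>)
qed

lemma smooth_diff_op:
  assumes "diff_op A" "smooth f"
  shows "smooth (A f)"
proof -
  obtain S a where A: "finite S" "\<And>\<alpha>. \<alpha> \<in> S \<Longrightarrow> smooth (a \<alpha>)"
    "\<And>f. smooth f \<Longrightarrow> A f = (\<lambda>x. \<Sum>\<alpha>\<in>S. a \<alpha> x * iter_pd \<alpha> f x)"
    using assms(1) unfolding diff_op_def by blast
  show ?thesis
    using A assms(2) by (auto intro!: smooth_sum smooth_mult smooth_iter_pd)
qed

lemma diff_op_lincomb:
  assumes "diff_op A" "\<And>t. t \<in> T \<Longrightarrow> smooth (h t)"
  shows "A (\<lambda>x. \<Sum>t\<in>T. c t * h t x) = (\<lambda>x. \<Sum>t\<in>T. c t * A (h t) x)"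
proof -
  obtain S a where A: "finite S" "\<And>\<alpha>. \<alpha> \<in> S \<Longrightarrow> smooth (a \<alpha>)"
    "\<And>f. smooth f \<Longrightarrow> A f = (\<lambda>x. \<Sum>\<alpha>\<in>S. a \<alpha> x * iter_pd \<alpha> f x)"
    using assms(1) unfolding diff_op_def by blast
  show ?thesis
    using assms(2)
    by (simp add: A(3) smooth_lincomb iter_pd_lincomb sum_distrib_left sum.swap[of _ S] mult_ac)
qed

lemma diff_op_cmult: "diff_op A \<Longrightarrow> smooth f \<Longrightarrow> A (\<lambda>x. c * f x) = (\<lambda>x. c * A f x)"
  using diff_op_lincomb[of A "{()}" "\<lambda>_. f" "\<lambda>_. c"] by simp

lemma diff_op_apply_zero: "diff_op A \<Longrightarrow> A (\<lambda>x. 0) = (\<lambda>x. 0)"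
  using diff_op_cmult[of A "\<lambda>x. 0" 0] by simp

lemma diff_op_pd_comp:
  assumes "diff_op A"
  shows "diff_op (\<lambda>f. pd j (A f))"
proof -
  obtain S a where A: "finite S" "\<And>\<alpha>. \<alpha> \<in> S \<Longrightarrow> smooth (a \<alpha>)"
    "\<And>f. smooth f \<Longrightarrow> A f = (\<lambda>x. \<Sum>\<alpha>\<in>S. a \<alpha> x * iter_pd \<alpha> f x)"
    using assms unfolding diff_op_def by blast
  have "pd j (A f) = (\<lambda>x. \<Sum>\<alpha>\<in>S. pd j (a \<alpha>) x * iter_pd \<alpha> f x + a \<alpha> x * iter_pd (j # \<alpha>) f x)"
    if "smooth f" for f
    using pd_lincomb[of S "\<lambda>\<alpha> x. a \<alpha> x * iter_pd \<alpha> f x" j "\<lambda>_. 1"] A that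
    by (simp add: pd_mult coord_differentiable_mult smooth_imp_coord_differentiable smooth_iter_pd)
  then show ?thesis
    by (intro diff_opI[of "S <+> S" "case_sum (\<lambda>\<alpha>. pd j (a \<alpha>)) a" _ "case_sum id (Cons j)"])
       (use A in \<open>auto simp: sum.Plus comp_def sum.distrib smooth_pd\<close>)
qed

lemma diff_op_iter_pd_comp: "diff_op A \<Longrightarrow> diff_op (\<lambda>f. iter_pd \<alpha> (A f))"
  by (induction \<alpha>) (simp_all add: diff_op_pd_comp)

lemma diff_op_comp:
  assumes "diff_op A" "diff_op B"
  shows "diff_op (\<lambda>f. A (B f))"
proof -
  obtain S a where A: "finite S" "\<And>\<alpha>. \<alpha> \<in> S \<Longrightarrow> smooth (a \<alpha>)"
    "\<And>f. smooth f \<Longrightarrow> A f = (\<lambda>x. \<Sum>\<alpha>\<in>S. a \<alpha> x * iter_pd \<alpha> f x)"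
    using assms(1) unfolding diff_op_def by blast
  have "diff_op (\<lambda>f x. \<Sum>\<alpha>\<in>S. a \<alpha> x * iter_pd \<alpha> (B f) x)"
    using A(2) assms(2) by (intro diff_op_sum diff_op_mult diff_op_iter_pd_comp)
  then show ?thesis
    by (rule diff_op_cong) (simp add: A(3) smooth_diff_op assms(2))
qed

lemma smooth_bidiff_op:
  assumes "bidiff_op B" "smooth f" "smooth g"
  shows "smooth (B f g)"
proof -
  obtain S a where "finite S" "\<And>p. p \<in> S \<Longrightarrow> smooth (a p)"
    "\<And>f g. smooth f \<Longrightarrow> smooth g \<Longrightarrow>
      B f g = (\<lambda>x. \<Sum>p\<in>S. a p x * iter_pd (fst p) f x * iter_pd (snd p) g x)"
    using assms(1) unfolding bidiff_op_def by blast
  then show ?thesis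
    using assms(2,3) by (auto intro!: smooth_sum smooth_mult smooth_iter_pd)
qed

lemma bidiff_op_zero_left: "bidiff_op B \<Longrightarrow> smooth g \<Longrightarrow> B (\<lambda>x. 0) g = (\<lambda>x. 0)"
  unfolding bidiff_op_def by (auto simp: iter_pd_const)

lemma diff_op_bidiff_op_left:
  assumes "bidiff_op B" "smooth f"
  shows "diff_op (B f)"
proof -
  obtain S a where B: "finite S" "\<And>p. p \<in> S \<Longrightarrow> smooth (a p)"
    "\<And>f g. smooth f \<Longrightarrow> smooth g \<Longrightarrow>
      B f g = (\<lambda>x. \<Sum>p\<in>S. a p x * iter_pd (fst p) f x * iter_pd (snd p) g x)"
    using assms(1) unfolding bidiff_op_def by blast
  show ?thesis
    by (rule diff_opI[of S "\<lambda>p x. a p x * iter_pd (fst p) f x" _ snd])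
       (use B assms(2) in \<open>auto intro: smooth_mult smooth_iter_pd\<close>)
qed

section \<open>Monomials and Euler's identity\<close>

(* Monomials are indexed by a finite set of positions carrying coordinate labels, so that
   removing one factor is removing one position. *)
definition mon :: "(nat \<Rightarrow> 'n::finite) \<Rightarrow> nat set \<Rightarrow> 'n fn" where
  "mon g I = (\<lambda>x. \<Prod>i\<in>I. x $ g i)"

lemma mon_empty [simp]: "mon g {} = (\<lambda>x. 1)"
  by (simp add: mon_def)

lemma smooth_mon [simp]: "smooth (mon g I)"
  unfolding mon_def by (rule smooth_prod) simp

lemma sum_coord_mult_mon:
  assumes "finite I"
  shows "(\<Sum>i\<in>I. x $ g i * mon g (I - {i}) x) = real (card I) * mon g I x"
proof -
  have "x $ g i * mon g (I - {i}) x = mon g I x" if "i \<in> I" for i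
    using prod.remove[OF assms that, of "\<lambda>i. x $ g i"] by (simp add: mon_def)
  then show ?thesis
    by simp
qed

lemma pd_mon: "pd j (mon g I) = (\<lambda>x. \<Sum>i\<in>I. of_bool (g i = j) * mon g (I - {i}) x)"
proof
  fix x
  have "((\<lambda>t. \<Prod>i\<in>I. (x + t *\<^sub>R axis j 1) $ g i) has_field_derivative
      (\<Sum>i\<in>I. of_bool (g i = j) * (\<Prod>k\<in>I - {i}. (x + 0 *\<^sub>R axis j 1) $ g k))) (at 0)"
    by (rule has_field_derivative_prod) (auto simp: axis_def intro!: derivative_eq_intros)
  then show "pd j (mon g I) x = (\<Sum>i\<in>I. of_bool (g i = j) * mon g (I - {i}) x)"
    unfolding mon_def by (simp add: pd_eqI)
qed

lemma sum_swap_off_diagonal: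
  fixes F :: "'a \<Rightarrow> 'a \<Rightarrow> 'b::ab_group_add"
  assumes "finite I"
  shows "(\<Sum>i\<in>I. \<Sum>j\<in>I - {i}. F i j) = (\<Sum>j\<in>I. \<Sum>i\<in>I - {j}. F i j)"
proof -
  have off_diagonal: "(\<Sum>i\<in>I. \<Sum>j\<in>I - {i}. G i j) = (\<Sum>i\<in>I. \<Sum>j\<in>I. G i j) - (\<Sum>i\<in>I. G i i)"
    for G :: "'a \<Rightarrow> 'a \<Rightarrow> 'b"
    using assms by (simp add: sum_diff1 sum_subtractf cong: sum.cong)
  show ?thesis
    using off_diagonal[of F] off_diagonal[of "\<lambda>j i. F i j"] sum.swap[of F I I] by simp
qed

(* Euler's identity for the homogeneous polynomial mon g I, differentiated by iter_pd \<alpha>. *)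
lemma sum_coord_mult_iter_pd_mon:
  "finite I \<Longrightarrow> (\<Sum>i\<in>I. x $ g i * iter_pd \<alpha> (mon g (I - {i})) x) =
     (real (card I) - real (length \<alpha>)) * iter_pd \<alpha> (mon g I) x"
proof (induction \<alpha> arbitrary: I rule: rev_induct)
  case Nil
  then show ?case by (simp add: sum_coord_mult_mon)
next
  case (snoc \<beta> \<alpha>)
  let ?\<delta> = "\<lambda>i. of_bool (g i = \<beta>) :: real"
  have iter_pd_snoc: "iter_pd (\<alpha> @ [\<beta>]) (mon g J) =
      (\<lambda>x. \<Sum>i\<in>J. ?\<delta> i * iter_pd \<alpha> (mon g (J - {i})) x)" for J
    by (simp add: iter_pd_append pd_mon iter_pd_lincomb)
  have "(\<Sum>i\<in>I. x $ g i * iter_pd (\<alpha> @ [\<beta>]) (mon g (I - {i})) x) =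
      (\<Sum>i\<in>I. \<Sum>i'\<in>I - {i}. x $ g i * (?\<delta> i' * iter_pd \<alpha> (mon g (I - {i} - {i'})) x))"
    unfolding iter_pd_snoc sum_distrib_left ..
  also have "\<dots> = (\<Sum>i'\<in>I. \<Sum>i\<in>I - {i'}. x $ g i * (?\<delta> i' * iter_pd \<alpha> (mon g (I - {i'} - {i})) x))"
    by (subst sum_swap_off_diagonal[OF snoc.prems]) (simp only: Diff_insert2[symmetric] insert_commute)
  also have "\<dots> = (\<Sum>i'\<in>I. ?\<delta> i' * (\<Sum>i\<in>I - {i'}. x $ g i * iter_pd \<alpha> (mon g (I - {i'} - {i})) x))"
    by (simp only: sum_distrib_left mult.left_commute)
  also have "\<dots> = (\<Sum>i'\<in>I. ?\<delta> i' * ((real (card I) - 1 - real (length \<alpha>)) * iter_pd \<alpha> (mon g (I - {i'})) x))"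
  proof (intro sum.cong refl)
    fix i' assume "i' \<in> I"
    then have "real (card (I - {i'})) = real (card I) - 1"
      using snoc.prems card_Suc_Diff1[of I i'] by (metis add_diff_cancel_left' of_nat_Suc)
    then show "?\<delta> i' * (\<Sum>i\<in>I - {i'}. x $ g i * iter_pd \<alpha> (mon g (I - {i'} - {i})) x) =
        ?\<delta> i' * ((real (card I) - 1 - real (length \<alpha>)) * iter_pd \<alpha> (mon g (I - {i'})) x)"
      using snoc.IH[of "I - {i'}"] snoc.prems by simp
  qed
  also have "\<dots> = (real (card I) - 1 - real (length \<alpha>)) * iter_pd (\<alpha> @ [\<beta>]) (mon g I) x"
    by (simp add: iter_pd_snoc sum_distrib_left mult.left_commute)
  finally show ?case
    by (simp only: length_append_singleton of_nat_Suc diff_diff_eq)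
qed

lemma sum_diff_op_pd_mon:
  assumes "\<And>j. diff_op (B j)"
  shows "(\<Sum>j\<in>UNIV. B j (pd j (mon g I)) x) = (\<Sum>i\<in>I. B (g i) (mon g (I - {i})) x)"
proof -
  have "(\<Sum>j\<in>UNIV. B j (pd j (mon g I)) x) = (\<Sum>j\<in>UNIV. \<Sum>i\<in>I. of_bool (g i = j) * B j (mon g (I - {i})) x)"
    by (simp add: pd_mon diff_op_lincomb[OF assms])
  also have "\<dots> = (\<Sum>i\<in>I. B (g i) (mon g (I - {i})) x)"
    by (subst sum.swap) (intro sum.cong refl; simp add: if_distrib[of "\<lambda>c. c * _"] sum.delta')
  finally show ?thesis .
qed

lemma diff_op_coeff_Nil:
  assumes "finite S" "E (\<lambda>x. 1) = (\<lambda>x. 0)"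
    and "\<And>f. smooth f \<Longrightarrow> E f = (\<lambda>x. \<Sum>\<alpha>\<in>S. e \<alpha> x * iter_pd \<alpha> f x)" "[] \<in> S"
  shows "e [] x = 0"
proof -
  have "E (\<lambda>x. 1) x = (\<Sum>\<alpha>\<in>S. if \<alpha> = [] then e \<alpha> x else 0)"
    by (simp add: assms(3)) (intro sum.cong refl; simp add: iter_pd_const)
  then show ?thesis
    using assms(1,2,4) by (simp add: sum.delta')
qed

lemma diff_op_euler_equation_solvable:
  assumes "diff_op E" "E (\<lambda>x. 1) = (\<lambda>x. 0)"
  obtains D where "diff_op D" "D (\<lambda>x. 1) = (\<lambda>x. 0)"
    "\<And>g I x. finite I \<Longrightarrow>
      real (card I) * D (mon g I) x = (\<Sum>i\<in>I. x $ g i * D (mon g (I - {i})) x) + E (mon g I) x"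
proof -
  obtain S e where S: "finite S" "\<And>\<alpha>. \<alpha> \<in> S \<Longrightarrow> smooth (e \<alpha>)"
    "\<And>f. smooth f \<Longrightarrow> E f = (\<lambda>x. \<Sum>\<alpha>\<in>S. e \<alpha> x * iter_pd \<alpha> f x)"
    using assms(1) unfolding diff_op_def by blast
  have e_Nil: "e [] x = 0" if "[] \<in> S" for x
    using diff_op_coeff_Nil[OF S(1) assms(2) S(3) that] .
  \<comment> \<open>Since inverse 0 = 0, the zeroth order coefficient of D vanishes.\<close>
  define d where "d \<alpha> = (\<lambda>x. inverse (real (length \<alpha>)) * e \<alpha> x)" for \<alpha>
  define D where "D f = (\<lambda>x. \<Sum>\<alpha>\<in>S. d \<alpha> x * iter_pd \<alpha> f x)" for f
  have d_length: "d \<alpha> x * real (length \<alpha>) = e \<alpha> x" if "\<alpha> \<in> S" for \<alpha> x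
    using e_Nil that by (cases "\<alpha> = []") (simp_all add: d_def)
  have "diff_op D"
    by (rule diff_opI[of S d _ id]) (use S in \<open>auto simp: D_def d_def intro: smooth_cmult\<close>)
  moreover have "D (\<lambda>x. 1) = (\<lambda>x. 0)"
    unfolding D_def d_def by (intro ext sum.neutral ballI) (simp add: iter_pd_const)
  moreover have "real (card I) * D (mon g I) x =
      (\<Sum>i\<in>I. x $ g i * D (mon g (I - {i})) x) + E (mon g I) x" if "finite I" for g I x
  proof -
    have "(\<Sum>i\<in>I. x $ g i * D (mon g (I - {i})) x) =
        (\<Sum>\<alpha>\<in>S. d \<alpha> x * (\<Sum>i\<in>I. x $ g i * iter_pd \<alpha> (mon g (I - {i})) x))"
      by (simp add: D_def sum_distrib_left sum.swap[of _ I] mult.left_commute)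
    also have "\<dots> = (\<Sum>\<alpha>\<in>S. d \<alpha> x * ((real (card I) - real (length \<alpha>)) * iter_pd \<alpha> (mon g I) x))"
      by (simp add: sum_coord_mult_iter_pd_mon that)
    also have "\<dots> = (\<Sum>\<alpha>\<in>S.
        real (card I) * (d \<alpha> x * iter_pd \<alpha> (mon g I) x) - e \<alpha> x * iter_pd \<alpha> (mon g I) x)"
      by (intro sum.cong refl) (simp add: algebra_simps flip: d_length)
    also have "\<dots> = real (card I) * D (mon g I) x - E (mon g I) x"
      by (simp add: D_def S(3) sum_subtractf sum_distrib_left)
    finally show ?thesis
      by simp
  qed
  ultimately show ?thesis
    using that by blast
qed

lemma euler_recursion_unique:
  fixes F G H :: "nat set \<Rightarrow> 'n::finite fn"
  assumes F: "\<And>J x. finite J \<Longrightarrow> J \<noteq> {} \<Longrightarrow>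
      real (card J) * F J x = (\<Sum>i\<in>J. x $ g i * F (J - {i}) x) + H J x"
    and G: "\<And>J x. finite J \<Longrightarrow> J \<noteq> {} \<Longrightarrow>
      real (card J) * G J x = (\<Sum>i\<in>J. x $ g i * G (J - {i}) x) + H J x"
    and "F {} = G {}" "finite I"
  shows "F I = G I"
  using \<open>finite I\<close>
proof (induction I rule: finite_psubset_induct)
  case (psubset I)
  show ?case
  proof (cases "I = {}")
    case False
    have "F (I - {i}) = G (I - {i})" if "i \<in> I" for i
      using psubset that by auto
    then have "real (card I) * F I x = real (card I) * G I x" for x
      using F G psubset.hyps False by simp
    moreover have "real (card I) \<noteq> 0"
      using psubset.hyps False by simp
    ultimately show ?thesis
      by auto
  qed (use assms(3) in simp)
qed

section \<open>Symmetrised star products of coordinates\<close>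

lemma sum_permutations_of_set_Cons:
  assumes "finite I" "I \<noteq> {}"
  shows "(\<Sum>js\<in>permutations_of_set I. F js) = (\<Sum>i\<in>I. \<Sum>js\<in>permutations_of_set (I - {i}). F (i # js))"
proof -
  have "(\<Sum>js\<in>permutations_of_set I. F js) = (\<Sum>i\<in>I. \<Sum>js\<in>(#) i ` permutations_of_set (I - {i}). F js)"
    unfolding permutations_of_set_nonempty[OF assms(2)] by (rule sum.UNION_disjoint) (use assms(1) in auto)
  also have "\<dots> = (\<Sum>i\<in>I. \<Sum>js\<in>permutations_of_set (I - {i}). F (i # js))"
    by (rule sum.cong[OF refl], subst sum.reindex) (auto simp: inj_on_def)
  finally show ?thesis .
qed

lemma sum_permutes_eq_sum_permutations_of_set:
  "(\<Sum>\<sigma> | \<sigma> permutes {..<n}. F (map \<sigma> [0..<n])) = (\<Sum>js\<in>permutations_of_set {..<n}. F js)"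
proof (rule sum.reindex_bij_witness[where j = "\<lambda>\<sigma>. map \<sigma> [0..<n]" and i = "\<lambda>js k. if k < n then js ! k else k"])
  fix \<sigma> assume "\<sigma> \<in> {\<sigma>. \<sigma> permutes {..<n}}"
  then have \<sigma>: "\<sigma> permutes {..<n}"
    by simp
  show "(\<lambda>k. if k < n then map \<sigma> [0..<n] ! k else k) = \<sigma>"
    using permutes_not_in[OF \<sigma>] by (auto simp: fun_eq_iff)
  show "map \<sigma> [0..<n] \<in> permutations_of_set {..<n}"
    using permutes_image[OF \<sigma>] permutes_inj_on[OF \<sigma>]
    by (intro permutations_of_setI) (simp_all add: atLeast0LessThan distinct_map)
next
  fix js assume js: "js \<in> permutations_of_set {..<n}"
  then have "length js = n"
    using length_finite_permutations_of_set by fastforce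
  then show "map (\<lambda>k. if k < n then js ! k else k) [0..<n] = js"
    by (intro nth_equalityI) auto
  have "bij_betw ((!) js) {..<n} {..<n}"
    using bij_betw_nth[of js] permutations_of_setD[OF js] \<open>length js = n\<close> by simp
  then have "bij_betw (\<lambda>k. if k < n then js ! k else k) {..<n} {..<n}"
    by (rule bij_betw_cong[THEN iffD1, rotated]) auto
  then show "(\<lambda>k. if k < n then js ! k else k) \<in> {\<sigma>. \<sigma> permutes {..<n}}"
    by (intro CollectI bij_imp_permutes) auto
qed simp

lemma smooth_coord_series [simp]: "smooth (coord_series j t)"
  by (simp add: coord_series_def)

definition star_word :: "(nat \<Rightarrow> 'n::finite fn \<Rightarrow> 'n fn \<Rightarrow> 'n fn) \<Rightarrow> 'n list \<Rightarrow> nat \<Rightarrow> 'n fn" where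
  "star_word C js = star_list C (map coord_series js)"

definition sym_star ::
    "(nat \<Rightarrow> 'n::finite fn \<Rightarrow> 'n fn \<Rightarrow> 'n fn) \<Rightarrow> (nat \<Rightarrow> 'n) \<Rightarrow> nat set \<Rightarrow> nat \<Rightarrow> 'n fn" where
  "sym_star C g I r =
    (\<lambda>x. (1 / fact (card I)) * (\<Sum>js\<in>permutations_of_set I. star_word C (map g js) r x))"

lemma star_word_Nil: "r \<ge> 1 \<Longrightarrow> star_word C [] r = (\<lambda>x. 0)"
  by (simp add: star_word_def one_series_def)

lemma sym_star_empty: "r \<ge> 1 \<Longrightarrow> sym_star C g {} r = (\<lambda>x. 0)"
  by (simp add: sym_star_def star_word_Nil)

context
  fixes C :: "nat \<Rightarrow> 'n::finite fn \<Rightarrow> 'n fn \<Rightarrow> 'n fn"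
  assumes bidiff_C: "\<And>s. bidiff_op (C s)"
    and C_0: "\<And>f g. smooth f \<Longrightarrow> smooth g \<Longrightarrow> C 0 f g = (\<lambda>x. f x * g x)"
begin

lemma smooth_star_word: "smooth (star_word C js r)"
  unfolding star_word_def
proof (induction js arbitrary: r)
  case Nil
  then show ?case
    by (simp add: one_series_def)
next
  case (Cons j js)
  then show ?case
    unfolding star_list.simps list.map star_def
    by (intro smooth_sum smooth_bidiff_op[OF bidiff_C] smooth_coord_series)
qed

lemma diff_op_C_coord: "diff_op (C s (\<lambda>x. x $ j))"
  by (simp add: diff_op_bidiff_op_left bidiff_C)

lemma star_word_Cons:
  "star_word C (j # js) r = (\<lambda>x. \<Sum>s\<le>r. C s (\<lambda>x. x $ j) (star_word C js (r - s)) x)"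
proof -
  have "C s (coord_series j t) (star_word C js u) x = (if t = 0 then C s (\<lambda>x. x $ j) (star_word C js u) x else 0)"
    for s t u x
    using bidiff_op_zero_left[OF bidiff_C smooth_star_word] by (simp add: coord_series_def)
  then show ?thesis
    by (simp add: star_word_def star_def sum.delta')
qed

lemma star_word_0: "star_word C js 0 = (\<lambda>x. prod_list (map (\<lambda>j. x $ j) js))"
proof (induction js)
  case Nil
  then show ?case
    by (simp add: star_word_def one_series_def)
next
  case (Cons j js)
  have "star_word C (j # js) 0 = (\<lambda>x. x $ j * star_word C js 0 x)"
    by (simp add: star_word_Cons C_0 smooth_star_word)
  then show ?case
    using Cons.IH by simp
qed

lemma sym_star_0:
  assumes "finite I"
  shows "sym_star C g I 0 = mon g I"
proof
  fix x
  have "star_word C (map g js) 0 x = mon g I x" if "js \<in> permutations_of_set I" for js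
    using permutations_of_setD[OF that] prod.distinct_set_conv_list[of js "\<lambda>i. x $ g i"]
    by (simp add: star_word_0 mon_def comp_def)
  then show "sym_star C g I 0 x = mon g I x"
    using assms by (simp add: sym_star_def)
qed

lemma smooth_sym_star: "smooth (sym_star C g I r)"
  unfolding sym_star_def by (intro smooth_cmult smooth_sum smooth_star_word)

lemma C_coord_sym_star:
  "C s (\<lambda>x. x $ j) (sym_star C g I r) x =
    (1 / fact (card I)) * (\<Sum>js\<in>permutations_of_set I. C s (\<lambda>x. x $ j) (star_word C (map g js) r) x)"
  unfolding sym_star_def sum_distrib_left
  by (subst diff_op_lincomb[OF diff_op_C_coord]) (simp_all add: smooth_star_word)

lemma sym_star_rec:
  assumes "finite I" "I \<noteq> {}"
  shows "real (card I) * sym_star C g I r x =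
    (\<Sum>i\<in>I. x $ g i * sym_star C g (I - {i}) r x) +
    (\<Sum>i\<in>I. \<Sum>s\<in>{1..r}. C s (\<lambda>x. x $ g i) (sym_star C g (I - {i}) (r - s)) x)"
proof -
  let ?c = "1 / fact (card I - 1) :: real"
  have c: "real (card I) * (1 / fact (card I)) = ?c"
    using assms by (simp add: fact_reduce[of "card I"] card_gt_0_iff)
  have split_0: "(\<Sum>s\<le>r. f s) = f 0 + (\<Sum>s\<in>{1..r}. f s)" for f :: "nat \<Rightarrow> real"
    by (simp add: atMost_atLeast0 sum.atLeast_Suc_atMost)
  have "real (card I) * sym_star C g I r x = ?c * (\<Sum>js\<in>permutations_of_set I. star_word C (map g js) r x)"
    by (simp only: sym_star_def mult.assoc[symmetric] c)
  also have "\<dots> = (\<Sum>i\<in>I. ?c * (\<Sum>js\<in>permutations_of_set (I - {i}).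
      \<Sum>s\<le>r. C s (\<lambda>x. x $ g i) (star_word C (map g js) (r - s)) x))"
    by (simp add: sum_permutations_of_set_Cons[OF assms] star_word_Cons sum_distrib_left)
  also have "\<dots> = (\<Sum>i\<in>I. \<Sum>s\<le>r. C s (\<lambda>x. x $ g i) (sym_star C g (I - {i}) (r - s)) x)"
  proof (intro sum.cong refl)
    fix i assume "i \<in> I"
    then have "card (I - {i}) = card I - 1"
      using assms(1) by simp
    then show "?c * (\<Sum>js\<in>permutations_of_set (I - {i}).
        \<Sum>s\<le>r. C s (\<lambda>x. x $ g i) (star_word C (map g js) (r - s)) x) =
      (\<Sum>s\<le>r. C s (\<lambda>x. x $ g i) (sym_star C g (I - {i}) (r - s)) x)"
      unfolding C_coord_sym_star sum_distrib_left by (simp only:) (rule sum.swap)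
  qed
  also have "\<dots> = (\<Sum>i\<in>I. x $ g i * sym_star C g (I - {i}) r x +
      (\<Sum>s\<in>{1..r}. C s (\<lambda>x. x $ g i) (sym_star C g (I - {i}) (r - s)) x))"
    by (simp only: split_0 C_0[OF smooth_coord smooth_sym_star] diff_zero)
  finally show ?thesis
    by (simp only: sum.distrib)
qed

lemma lower_terms_diff_op:
  assumes Df: "\<And>s. s \<in> {1..r} \<Longrightarrow> diff_op (Df s)"
    and Df_mon: "\<And>s g I. s \<in> {1..r} \<Longrightarrow> finite I \<Longrightarrow> Df s (mon g I) = sym_star C g I (r - s)"
  obtains E where "diff_op E" "E (\<lambda>x. 1) = (\<lambda>x. 0)"
    "\<And>g I x. finite I \<Longrightarrow>
      E (mon g I) x = (\<Sum>i\<in>I. \<Sum>s\<in>{1..r}. C s (\<lambda>x. x $ g i) (sym_star C g (I - {i}) (r - s)) x)"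
proof -
  define E where "E f = (\<lambda>x. \<Sum>s\<in>{1..r}. \<Sum>j\<in>UNIV. C s (\<lambda>x. x $ j) (Df s (pd j f)) x)" for f
  have diff_op_C_Df: "diff_op (\<lambda>f. C s (\<lambda>x. x $ j) (Df s f))" if "s \<in> {1..r}" for s j
    by (rule diff_op_comp[OF diff_op_C_coord Df[OF that]])
  have "diff_op E"
    unfolding E_def
  proof (intro diff_op_sum)
    fix s j assume "s \<in> {1..r}"
    then show "diff_op (\<lambda>f. C s (\<lambda>x. x $ j) (Df s (pd j f)))"
      by (rule diff_op_comp[OF diff_op_C_Df diff_op_pd])
  qed
  moreover have "E (\<lambda>x. 1) = (\<lambda>x. 0)"
  proof -
    have "C s (\<lambda>x. x $ j) (Df s (\<lambda>x. 0)) = (\<lambda>x. 0)" if "s \<in> {1..r}" for s j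
      using diff_op_apply_zero[OF diff_op_C_Df[OF that]] .
    then show ?thesis
      unfolding E_def by (intro ext sum.neutral ballI) simp
  qed
  moreover have "E (mon g I) x = (\<Sum>i\<in>I. \<Sum>s\<in>{1..r}. C s (\<lambda>x. x $ g i) (sym_star C g (I - {i}) (r - s)) x)"
    if "finite I" for g I x
  proof -
    have "E (mon g I) x = (\<Sum>s\<in>{1..r}. \<Sum>j\<in>UNIV. C s (\<lambda>x. x $ j) (Df s (pd j (mon g I))) x)"
      by (simp add: E_def)
    also have "\<dots> = (\<Sum>s\<in>{1..r}. \<Sum>i\<in>I. C s (\<lambda>x. x $ g i) (Df s (mon g (I - {i}))) x)"
      by (intro sum.cong refl sum_diff_op_pd_mon diff_op_C_Df)
    also have "\<dots> = (\<Sum>i\<in>I. \<Sum>s\<in>{1..r}. C s (\<lambda>x. x $ g i) (sym_star C g (I - {i}) (r - s)) x)"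
      using that by (subst sum.swap) (intro sum.cong refl; simp add: Df_mon)
    finally show ?thesis .
  qed
  ultimately show ?thesis
    using that by blast
qed

lemma sym_star_step:
  assumes "r \<noteq> 0"
    and "\<And>s. s \<in> {1..r} \<Longrightarrow> diff_op (Df s)"
    and "\<And>s g I. s \<in> {1..r} \<Longrightarrow> finite I \<Longrightarrow> Df s (mon g I) = sym_star C g I (r - s)"
  shows "\<exists>D. diff_op D \<and> (\<forall>g I. finite I \<longrightarrow> D (mon g I) = sym_star C g I r)"
proof -
  obtain E where E: "diff_op E" "E (\<lambda>x. 1) = (\<lambda>x. 0)"
    "\<And>g I x. finite I \<Longrightarrow>
      E (mon g I) x = (\<Sum>i\<in>I. \<Sum>s\<in>{1..r}. C s (\<lambda>x. x $ g i) (sym_star C g (I - {i}) (r - s)) x)"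
    using lower_terms_diff_op[OF assms(2,3)] by blast
  obtain D where D: "diff_op D" "D (\<lambda>x. 1) = (\<lambda>x. 0)"
    "\<And>g I x. finite I \<Longrightarrow>
      real (card I) * D (mon g I) x = (\<Sum>i\<in>I. x $ g i * D (mon g (I - {i})) x) + E (mon g I) x"
    using diff_op_euler_equation_solvable[OF E(1,2)] by blast
  have "D (mon g I) = sym_star C g I r" if "finite I" for g I
  proof (rule euler_recursion_unique[OF _ _ _ that])
    show "real (card J) * D (mon g J) x = (\<Sum>i\<in>J. x $ g i * D (mon g (J - {i})) x) +
        (\<Sum>i\<in>J. \<Sum>s\<in>{1..r}. C s (\<lambda>x. x $ g i) (sym_star C g (J - {i}) (r - s)) x)"
      if "finite J" for J x
      using D(3) E(3) that by simp
    show "real (card J) * sym_star C g J r x = (\<Sum>i\<in>J. x $ g i * sym_star C g (J - {i}) r x) +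
        (\<Sum>i\<in>J. \<Sum>s\<in>{1..r}. C s (\<lambda>x. x $ g i) (sym_star C g (J - {i}) (r - s)) x)"
      if "finite J" "J \<noteq> {}" for J x
      using sym_star_rec[OF that] .
    show "D (mon g {}) = sym_star C g {} r"
      using D(2) assms(1) by (simp add: sym_star_empty)
  qed
  then show ?thesis
    using D(1) by blast
qed

lemma diff_op_sym_star: "\<exists>D. diff_op D \<and> (\<forall>g I. finite I \<longrightarrow> D (mon g I) = sym_star C g I r)"
proof (induction r rule: less_induct)
  case (less r)
  show ?case
  proof (cases "r = 0")
    case True
    then show ?thesis
      using diff_op_id sym_star_0 by auto
  next
    case False
    obtain Df where "\<And>r'. r' < r \<Longrightarrow>
        diff_op (Df r') \<and> (\<forall>g I. finite I \<longrightarrow> Df r' (mon g I) = sym_star C g I r')"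
      using less.IH by metis
    then show ?thesis
      using False by (intro sym_star_step[of r "\<lambda>s. Df (r - s)"]) auto
  qed
qed

end

lemma mono_eq_mon:
  fixes m :: "'n::finite list"
  shows "mono m = mon (nth m) {..<length m}"
proof
  fix x :: "real ^ 'n"
  have "mono m x = prod_list (map (\<lambda>k. x $ (m ! k)) [0..<length m])"
    unfolding mono_def by (subst map_nth[symmetric]) (simp add: comp_def)
  also have "\<dots> = mon (nth m) {..<length m} x"
    unfolding mon_def by (simp add: prod.distinct_set_conv_list[symmetric] atLeast0LessThan)
  finally show "mono m x = mon (nth m) {..<length m} x" .
qed

lemma rho_mono_eq_sym_star: "rho_mono C m r = sym_star C (nth m) {..<length m} r"
proof
  fix x
  have "(\<Sum>\<sigma> | \<sigma> permutes {..<length m}.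
          star_list C (map (\<lambda>j. coord_series (m ! \<sigma> j)) [0..<length m]) r x) =
      (\<Sum>\<sigma> | \<sigma> permutes {..<length m}. star_word C (map (nth m) (map \<sigma> [0..<length m])) r x)"
    by (simp add: star_word_def comp_def)
  also have "\<dots> = (\<Sum>js\<in>permutations_of_set {..<length m}. star_word C (map (nth m) js) r x)"
    by (rule sum_permutes_eq_sum_permutations_of_set)
  finally show "rho_mono C m r x = sym_star C (nth m) {..<length m} r x"
    unfolding rho_mono_def sym_star_def by simp
qed

theorem theorem2:
  fixes P :: "('n::finite) fn \<Rightarrow> 'n fn \<Rightarrow> 'n fn"
    and C :: "nat \<Rightarrow> 'n fn \<Rightarrow> 'n fn \<Rightarrow> 'n fn"
  assumes "poisson_bracket P"
    and "star_product P C"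
    and "r \<ge> 1"
  shows "\<exists>D. diff_op D \<and> (\<forall>c. D (\<lambda>x. c) = (\<lambda>x. 0)) \<and>
           (\<forall>M (c :: 'n list \<Rightarrow> real). finite M \<longrightarrow>
              D (\<lambda>x. \<Sum>m\<in>M. c m * mono m x) = (\<lambda>x. \<Sum>m\<in>M. c m * rho_mono C m r x))"
proof -
  have "\<And>s. bidiff_op (C s)" "\<And>f g. smooth f \<Longrightarrow> smooth g \<Longrightarrow> C 0 f g = (\<lambda>x. f x * g x)"
    using assms(2) unfolding star_product_def by blast+
  then obtain D where D: "diff_op D" "\<And>g I. finite I \<Longrightarrow> D (mon g I) = sym_star C g I r"
    using diff_op_sym_star by blast
  have "D (\<lambda>x. 1) = (\<lambda>x. 0)"
    using D(2)[of "{}" "\<lambda>_. undefined"] sym_star_empty[OF assms(3)] by simp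
  then have "D (\<lambda>x. c) = (\<lambda>x. 0)" for c
    using diff_op_cmult[OF D(1) smooth_const, of c 1] by simp
  moreover have "D (\<lambda>x. \<Sum>m\<in>M. c m * mono m x) = (\<lambda>x. \<Sum>m\<in>M. c m * rho_mono C m r x)"
    for M and c :: "'n list \<Rightarrow> real"
    by (simp add: diff_op_lincomb[OF D(1)] mono_eq_mon D(2) rho_mono_eq_sym_star)
  ultimately show ?thesis
    using D(1) by blast
qed

end
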